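(* Let $T$ be a tree with $n$ vertices. Then $\mathcal{Z}^{\mathrm{TE}}_+(T)\cong K_n$ and $\mathcal{Z}^{\mathrm{TS}}_+(T)\cong T$.
   Context: PSD forcing: vertices are colored blue or white; if $B$ is the current set of blue vertices, $C$ a connected component of $G-B$, and $u$ a blue vertex with $N_G(u)\cap V(C)=\{v\}$, then $u$ may force $v$ to become blue. A PSD forcing set is a set $B$ of initially blue vertices such that repeated application of this rule turns every vertex blue; $\mathrm{Z}_+(G)$ is the minimum size of a PSD forcing set. $\mathcal{Z}^{\mathrm{TE}}_+(G)$ (PSD token exchange graph) has as vertices the minimum PSD forcing sets of $G$, with $S_1S_2$ an edge iff $S_1\setminus S_2=\{v_1\}$ and $S_2\setminus S_1=\{v_2\}$ for some vertices $v_1,v_2$; $\mathcal{Z}^{\mathrm{TS}}_+(G)$ (PSD token sliding graph) has the same vertices and the additional requirement $v_1v_2\in E(G)$. *)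

theory Defs
  imports Main
begin

definition simple_graph :: "'a set \<Rightarrow> ('a \<Rightarrow> 'a \<Rightarrow> bool) \<Rightarrow> bool" where
  "simple_graph V E \<longleftrightarrow> finite V \<and> (\<forall>x y. E x y \<longrightarrow> E y x)
     \<and> (\<forall>x. \<not> E x x) \<and> (\<forall>x y. E x y \<longrightarrow> x \<in> V \<and> y \<in> V)"

definition connected_graph :: "'a set \<Rightarrow> ('a \<Rightarrow> 'a \<Rightarrow> bool) \<Rightarrow> bool" where
  "connected_graph V E \<longleftrightarrow> V \<noteq> {} \<and> (\<forall>u\<in>V. \<forall>v\<in>V. E\<^sup>*\<^sup>* u v)"

definition is_cycle :: "('a \<Rightarrow> 'a \<Rightarrow> bool) \<Rightarrow> 'a list \<Rightarrow> bool" where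
  "is_cycle E xs \<longleftrightarrow> length xs \<ge> 3 \<and> distinct xs
     \<and> (\<forall>i. Suc i < length xs \<longrightarrow> E (xs ! i) (xs ! Suc i))
     \<and> E (last xs) (hd xs)"

definition tree :: "'a set \<Rightarrow> ('a \<Rightarrow> 'a \<Rightarrow> bool) \<Rightarrow> bool" where
  "tree V E \<longleftrightarrow> simple_graph V E \<and> connected_graph V E \<and> (\<nexists>xs. is_cycle E xs)"

definition comp_minus :: "'a set \<Rightarrow> ('a \<Rightarrow> 'a \<Rightarrow> bool) \<Rightarrow> 'a set \<Rightarrow> 'a \<Rightarrow> 'a set" where
  "comp_minus V E B v = {w \<in> V - B. (\<lambda>x y. E x y \<and> x \<notin> B \<and> y \<notin> B)\<^sup>*\<^sup>* v w}"

definition psd_force :: "'a set \<Rightarrow> ('a \<Rightarrow> 'a \<Rightarrow> bool) \<Rightarrow> 'a set \<Rightarrow> 'a \<Rightarrow> 'a \<Rightarrow> bool" where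
  "psd_force V E B u v \<longleftrightarrow> u \<in> B \<and> v \<in> V - B
     \<and> {w. E u w} \<inter> comp_minus V E B v = {v}"

inductive psd_reach :: "'a set \<Rightarrow> ('a \<Rightarrow> 'a \<Rightarrow> bool) \<Rightarrow> 'a set \<Rightarrow> 'a set \<Rightarrow> bool"
  for V E B where
  start: "psd_reach V E B B"
| step: "psd_reach V E B S \<Longrightarrow> psd_force V E S u v \<Longrightarrow> psd_reach V E B (insert v S)"

definition psd_forcing_set :: "'a set \<Rightarrow> ('a \<Rightarrow> 'a \<Rightarrow> bool) \<Rightarrow> 'a set \<Rightarrow> bool" where
  "psd_forcing_set V E B \<longleftrightarrow> B \<subseteq> V \<and> psd_reach V E B V"

definition Z_plus :: "'a set \<Rightarrow> ('a \<Rightarrow> 'a \<Rightarrow> bool) \<Rightarrow> nat" where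
  "Z_plus V E = Min (card ` {B. psd_forcing_set V E B})"

definition min_psd_sets :: "'a set \<Rightarrow> ('a \<Rightarrow> 'a \<Rightarrow> bool) \<Rightarrow> 'a set set" where
  "min_psd_sets V E = {B. psd_forcing_set V E B \<and> card B = Z_plus V E}"

definition TE_adj :: "'a set \<Rightarrow> 'a set \<Rightarrow> bool" where
  "TE_adj S1 S2 \<longleftrightarrow> (\<exists>v1 v2. S1 - S2 = {v1} \<and> S2 - S1 = {v2})"

definition TS_adj :: "('a \<Rightarrow> 'a \<Rightarrow> bool) \<Rightarrow> 'a set \<Rightarrow> 'a set \<Rightarrow> bool" where
  "TS_adj E S1 S2 \<longleftrightarrow> (\<exists>v1 v2. S1 - S2 = {v1} \<and> S2 - S1 = {v2} \<and> E v1 v2)"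

definition K_adj :: "nat \<Rightarrow> nat \<Rightarrow> bool" where
  "K_adj x y \<longleftrightarrow> x \<noteq> y"

definition graph_iso :: "'a set \<Rightarrow> ('a \<Rightarrow> 'a \<Rightarrow> bool) \<Rightarrow> 'b set \<Rightarrow> ('b \<Rightarrow> 'b \<Rightarrow> bool) \<Rightarrow> bool" where
  "graph_iso V1 E1 V2 E2 \<longleftrightarrow> (\<exists>f. bij_betw f V1 V2
     \<and> (\<forall>x\<in>V1. \<forall>y\<in>V1. E1 x y \<longleftrightarrow> E2 (f x) (f y)))"

end

theory Submission
  imports Defs "HOL-Library.Transitive_Closure_Table"
begin

text \<open>In a tree every vertex alone is a PSD forcing set: a blue vertex \<open>u\<close> always forces
any white neighbour \<open>w\<close>, since a second neighbour of \<open>u\<close> in the white component of \<open>w\<close>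
would close a cycle through \<open>u\<close>; by connectivity such a pair \<open>u, w\<close> exists until all of
\<open>V\<close> is blue. The empty set forces nothing, so \<open>Z\<^sub>+(T) = 1\<close> and the minimum PSD forcing
sets are exactly the singletons. Two singletons always differ in exactly one token, which
gives \<open>K\<^sub>n\<close>, and the exchange \<open>{a} \<rightarrow> {b}\<close> is a slide iff \<open>ab\<close> is an edge, which gives \<open>T\<close>.\<close>

lemma is_cycle_close_path:
  assumes path: "rtrancl_path E w xs x" and "xs \<noteq> []"
    and "distinct (u # w # xs)" and "E u w" and "E x u"
  shows "is_cycle E (u # w # xs)"
  unfolding is_cycle_def
proof (intro conjI allI impI)
  show "3 \<le> length (u # w # xs)" using \<open>xs \<noteq> []\<close> by (cases xs) auto
  show "E ((u # w # xs) ! i) ((u # w # xs) ! Suc i)" if "Suc i < length (u # w # xs)" for i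
    using \<open>E u w\<close> rtrancl_path_nth[OF path, of "i - 1"] that by (cases i) auto
  show "E (last (u # w # xs)) (hd (u # w # xs))"
    using rtrancl_path_last[OF path \<open>xs \<noteq> []\<close>] \<open>xs \<noteq> []\<close> \<open>E x u\<close> by simp
qed (use assms in auto)

lemma psd_force_neighbour_acyclic:
  assumes sym: "\<And>x y. E x y \<Longrightarrow> E y x" and acyclic: "\<nexists>xs. is_cycle E xs"
    and "u \<in> S" and w: "w \<in> V - S" and "E u w"
  shows "psd_force V E S u w"
proof -
  let ?R = "\<lambda>x y. E x y \<and> x \<notin> S \<and> y \<notin> S"
  have "x = w" if "E u x" and "x \<in> comp_minus V E S w" for x
  proof (rule ccontr)
    assume "x \<noteq> w"
    from \<open>x \<in> comp_minus V E S w\<close> obtain xs where "rtrancl_path ?R w xs x"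
      unfolding comp_minus_def rtranclp_eq_rtrancl_path by blast
    then obtain xs' where path: "rtrancl_path ?R w xs' x" and "distinct (w # xs')"
      by (rule rtrancl_path_distinct)
    have "xs' \<noteq> []" using path \<open>x \<noteq> w\<close> by (auto elim: rtrancl_path.cases)
    have "z \<notin> S" if "z \<in> set xs'" for z
      using rtrancl_path_Range[OF path that] by blast
    then have "distinct (u # w # xs')"
      using \<open>distinct (w # xs')\<close> \<open>u \<in> S\<close> w by auto
    moreover have "rtrancl_path E w xs' x" using path by (rule rtrancl_path_mono) simp
    ultimately have "is_cycle E (u # w # xs')"
      using \<open>xs' \<noteq> []\<close> \<open>E u w\<close> sym[OF \<open>E u x\<close>] by (intro is_cycle_close_path)
    with acyclic show False by blast
  qed
  moreover have "w \<in> comp_minus V E S w" using w unfolding comp_minus_def by auto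
  ultimately show ?thesis unfolding psd_force_def using \<open>u \<in> S\<close> w \<open>E u w\<close> by auto
qed

lemma rtranclp_crossing_edge:
  assumes "E\<^sup>*\<^sup>* a b" "a \<in> S" "b \<notin> S"
  obtains u w where "u \<in> S" "w \<notin> S" "E u w"
  using assms by (induction rule: rtranclp_induct) auto

lemma psd_reach_tree_all:
  assumes T: "tree V E"
  shows "psd_reach V E B S \<Longrightarrow> S \<subseteq> V \<Longrightarrow> S \<noteq> {} \<Longrightarrow> psd_reach V E B V"
proof (induction "card (V - S)" arbitrary: S rule: less_induct)
  case less
  have "finite V" and conn: "\<forall>a\<in>V. \<forall>b\<in>V. E\<^sup>*\<^sup>* a b"
    and sym: "\<And>x y. E x y \<Longrightarrow> E y x" and inV: "\<And>x y. E x y \<Longrightarrow> y \<in> V"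
    and acyclic: "\<nexists>xs. is_cycle E xs"
    using T unfolding tree_def simple_graph_def connected_graph_def by auto
  show ?case
  proof (cases "S = V")
    case True
    then show ?thesis using less.prems by simp
  next
    case False
    then obtain a b where "a \<in> S" "b \<in> V" "b \<notin> S" using less.prems by auto
    with conn less.prems(2) have "E\<^sup>*\<^sup>* a b" by blast
    then obtain u w where uw: "u \<in> S" "w \<notin> S" "E u w"
      using \<open>a \<in> S\<close> \<open>b \<notin> S\<close> by (rule rtranclp_crossing_edge)
    have "w \<in> V" using inV uw(3) .
    with uw have "psd_force V E S u w"
      by (intro psd_force_neighbour_acyclic[OF sym acyclic]) auto
    with less.prems(1) have "psd_reach V E B (insert w S)" by (rule psd_reach.step)
    moreover have "card (V - insert w S) < card (V - S)"
      using \<open>finite V\<close> \<open>w \<in> V\<close> uw(2) by (intro psubset_card_mono) auto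
    ultimately show ?thesis
      using less.hyps less.prems(2) \<open>w \<in> V\<close> by (metis insert_not_empty insert_subset)
  qed
qed

lemma psd_reach_empty: "psd_reach V E {} S \<Longrightarrow> S = {}"
  by (induction rule: psd_reach.induct) (auto simp: psd_force_def)

lemma psd_forcing_set_tree_singleton:
  assumes "tree V E" and "v \<in> V"
  shows "psd_forcing_set V E {v}"
  unfolding psd_forcing_set_def
  using assms psd_reach_tree_all[OF assms(1) psd_reach.start] by auto

lemma Z_plus_tree:
  assumes T: "tree V E"
  shows "Z_plus V E = 1"
  unfolding Z_plus_def
proof (rule Min_eqI)
  have "finite V" "V \<noteq> {}"
    using T unfolding tree_def simple_graph_def connected_graph_def by auto
  have "card ` {B. psd_forcing_set V E B} \<subseteq> card ` Pow V"
    unfolding psd_forcing_set_def by auto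
  with \<open>finite V\<close> show "finite (card ` {B. psd_forcing_set V E B})"
    by (meson finite_Pow_iff finite_imageI finite_subset)
  show "1 \<le> k" if "k \<in> card ` {B. psd_forcing_set V E B}" for k
  proof -
    obtain B where B: "psd_forcing_set V E B" "k = card B"
      using \<open>k \<in> card ` {B. psd_forcing_set V E B}\<close> by auto
    then have "B \<noteq> {}"
      using psd_reach_empty \<open>V \<noteq> {}\<close> unfolding psd_forcing_set_def by blast
    moreover have "finite B"
      using B(1) \<open>finite V\<close> unfolding psd_forcing_set_def by (auto intro: finite_subset)
    ultimately show ?thesis using B(2) by (simp add: Suc_le_eq card_gt_0_iff)
  qed
  obtain v where "v \<in> V" using \<open>V \<noteq> {}\<close> by auto
  then show "1 \<in> card ` {B. psd_forcing_set V E B}"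
    using psd_forcing_set_tree_singleton[OF T] by force
qed

lemma min_psd_sets_tree:
  assumes T: "tree V E"
  shows "min_psd_sets V E = (\<lambda>v. {v}) ` V"
  unfolding min_psd_sets_def Z_plus_tree[OF T]
  using psd_forcing_set_tree_singleton[OF T]
  by (auto simp: card_1_singleton_iff psd_forcing_set_def)

lemma graph_iso_trans:
  assumes "graph_iso V1 E1 V2 E2" and "graph_iso V2 E2 V3 E3"
  shows "graph_iso V1 E1 V3 E3"
proof -
  obtain f where f: "bij_betw f V1 V2" "\<forall>x\<in>V1. \<forall>y\<in>V1. E1 x y \<longleftrightarrow> E2 (f x) (f y)"
    using assms(1) unfolding graph_iso_def by blast
  obtain g where g: "bij_betw g V2 V3" "\<forall>x\<in>V2. \<forall>y\<in>V2. E2 x y \<longleftrightarrow> E3 (g x) (g y)"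
    using assms(2) unfolding graph_iso_def by blast
  have "\<forall>x\<in>V1. \<forall>y\<in>V1. E1 x y \<longleftrightarrow> E3 ((g \<circ> f) x) ((g \<circ> f) y)"
    using f g bij_betw_apply[OF f(1)] by simp
  then show ?thesis
    unfolding graph_iso_def using bij_betw_trans[OF f(1) g(1)] by blast
qed

lemma graph_iso_singletons:
  assumes "\<And>a b. a \<in> V \<Longrightarrow> b \<in> V \<Longrightarrow> R {a} {b} \<longleftrightarrow> E a b"
  shows "graph_iso ((\<lambda>v. {v}) ` V) R V E"
proof -
  have "bij_betw the_elem ((\<lambda>v. {v}) ` V) V"
    by (rule bij_betw_byWitness[where f'="\<lambda>v. {v}"]) auto
  then show ?thesis unfolding graph_iso_def using assms by auto
qed

lemma graph_iso_complete:
  assumes "finite V" and "card V = n"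
  shows "graph_iso V (\<noteq>) {0..<n} K_adj"
proof -
  obtain h where h: "bij_betw h V {0..<n}"
    using ex_bij_betw_finite_nat[OF \<open>finite V\<close>] assms(2) by blast
  then have "\<forall>x\<in>V. \<forall>y\<in>V. x \<noteq> y \<longleftrightarrow> K_adj (h x) (h y)"
    unfolding K_adj_def bij_betw_def inj_on_def by blast
  with h show ?thesis unfolding graph_iso_def by blast
qed

theorem theorem4p7:
  fixes V :: "'a set" and E :: "'a \<Rightarrow> 'a \<Rightarrow> bool" and n :: nat
  assumes "tree V E" and "card V = n"
  shows "graph_iso (min_psd_sets V E) TE_adj {0..<n} K_adj
       \<and> graph_iso (min_psd_sets V E) (TS_adj E) V E"
proof
  have "finite V" and irrefl: "\<And>x. \<not> E x x"
    using assms(1) unfolding tree_def simple_graph_def by auto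
  have "graph_iso ((\<lambda>v. {v}) ` V) TE_adj V (\<noteq>)"
    by (rule graph_iso_singletons) (auto simp: TE_adj_def)
  then show "graph_iso (min_psd_sets V E) TE_adj {0..<n} K_adj"
    unfolding min_psd_sets_tree[OF assms(1)]
    using graph_iso_trans graph_iso_complete[OF \<open>finite V\<close> assms(2)] by blast
  have "TS_adj E {a} {b} \<longleftrightarrow> E a b" for a b
    using irrefl[of a] unfolding TS_adj_def by (cases "a = b") auto
  then show "graph_iso (min_psd_sets V E) (TS_adj E) V E"
    unfolding min_psd_sets_tree[OF assms(1)] by (rule graph_iso_singletons)
qed

end
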